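(* For every $n\ge 2$, the number of $n\times n$ permutation matrices $P$ that are the leaf matrix of exactly one CNM of size $n$ is $2^{n-2}$.
   Context: A complete non-ambiguous matrix (CNM) of size $n$ is an $n\times n$ matrix $M=(m_{i,j})$ with entries in $\{0,1\}$ whose support $T=\{(i,j): m_{i,j}=1\}$ (whose elements are called vertices) satisfies: (1) $(1,1)\in T$; (2) for every $p=(i,j)\in T$ with $p\neq(1,1)$, exactly one of the following holds: there is $(i',j)\in T$ with $i'<i$, or there is $(i,j')\in T$ with $j'<j$; (3) every row and every column of $M$ contains at least one vertex; (4) define the parent of $p=(i,j)\neq(1,1)$ to be $(i',j)$ with $i'<i$ maximal if such a vertex exists, and otherwise $(i,j')$ with $j'<j$ maximal; then every vertex is the parent of either zero or exactly two vertices. A vertex with no children is a leaf. The leaf matrix $p(M)$ is obtained from $M$ by replacing all non-leaf vertices by $0$ (it is a permutation matrix). *)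

theory Defs
  imports Main
begin

(* An n x n 0/1 matrix is represented by its support T, a set of positions (i,j)
   with 1 <= i,j <= n (rows/columns indexed from 1). *)

definition cnm_parent :: "(nat \<times> nat) set \<Rightarrow> nat \<times> nat \<Rightarrow> nat \<times> nat" where
  "cnm_parent T p = (case p of (i, j) \<Rightarrow>
     if (\<exists>i'. i' < i \<and> (i', j) \<in> T)
     then (GREATEST i'. i' < i \<and> (i', j) \<in> T, j)
     else (i, GREATEST j'. j' < j \<and> (i, j') \<in> T))"

definition cnm_children :: "(nat \<times> nat) set \<Rightarrow> nat \<times> nat \<Rightarrow> (nat \<times> nat) set" where
  "cnm_children T v = {p \<in> T. p \<noteq> (1, 1) \<and> cnm_parent T p = v}"

definition is_cnm :: "nat \<Rightarrow> (nat \<times> nat) set \<Rightarrow> bool" where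
  "is_cnm n T \<longleftrightarrow>
     T \<subseteq> {1..n} \<times> {1..n} \<and>
     (1, 1) \<in> T \<and>
     (\<forall>(i, j) \<in> T. (i, j) \<noteq> (1, 1) \<longrightarrow>
        ((\<exists>i'. i' < i \<and> (i', j) \<in> T) \<noteq> (\<exists>j'. j' < j \<and> (i, j') \<in> T))) \<and>
     (\<forall>i \<in> {1..n}. \<exists>j. (i, j) \<in> T) \<and>
     (\<forall>j \<in> {1..n}. \<exists>i. (i, j) \<in> T) \<and>
     (\<forall>v \<in> T. card (cnm_children T v) = 0 \<or> card (cnm_children T v) = 2)"

definition leaf_matrix :: "(nat \<times> nat) set \<Rightarrow> (nat \<times> nat) set" where
  "leaf_matrix T = {v \<in> T. cnm_children T v = {}}"

definition is_perm_matrix :: "nat \<Rightarrow> (nat \<times> nat) set \<Rightarrow> bool" where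
  "is_perm_matrix n P \<longleftrightarrow>
     P \<subseteq> {1..n} \<times> {1..n} \<and>
     (\<forall>i \<in> {1..n}. \<exists>!j. (i, j) \<in> P) \<and>
     (\<forall>j \<in> {1..n}. \<exists>!i. (i, j) \<in> P)"

end

theory Submission
  imports Defs
begin

text \<open>In a CNM the children of a vertex are the nearest vertices below it and to its right, so a
  vertex is a leaf iff it is the lowest vertex of its column, and the leaves form a permutation
  matrix. If \<open>(2, 1)\<close> is a leaf, then row 2 and column 1 contain no other vertex besides the root
  \<open>(1, 1)\<close>, and deleting them is a bijection onto the CNMs of size \<open>n - 1\<close> compatible with the leaf
  matrices; by transposition the same holds for \<open>(1, 2)\<close>. If neither is a leaf, moving a single
  vertex produces a second CNM with the same leaves. So the leaf matrices of size \<open>n + 1\<close> with a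
  unique CNM arise from those of size \<open>n\<close> by inserting a leaf at \<open>(2, 1)\<close> or at \<open>(1, 2)\<close>; for
  \<open>n \<ge> 2\<close> the two insertions have disjoint images because the root is not a leaf, so the count
  doubles at each step starting from 1 for \<open>n = 2\<close>.\<close>

section \<open>A local description of CNMs\<close>

definition has_above :: "(nat \<times> nat) set \<Rightarrow> nat \<Rightarrow> nat \<Rightarrow> bool" where
  "has_above T i j \<longleftrightarrow> (\<exists>i'<i. (i', j) \<in> T)"

definition has_left :: "(nat \<times> nat) set \<Rightarrow> nat \<Rightarrow> nat \<Rightarrow> bool" where
  "has_left T i j \<longleftrightarrow> (\<exists>j'<j. (i, j') \<in> T)"

definition has_below :: "(nat \<times> nat) set \<Rightarrow> nat \<Rightarrow> nat \<Rightarrow> bool" where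
  "has_below T i j \<longleftrightarrow> (\<exists>i'>i. (i', j) \<in> T)"

definition has_right :: "(nat \<times> nat) set \<Rightarrow> nat \<Rightarrow> nat \<Rightarrow> bool" where
  "has_right T i j \<longleftrightarrow> (\<exists>j'>j. (i, j') \<in> T)"

lemma has_aboveI: "i' < i \<Longrightarrow> (i', j) \<in> T \<Longrightarrow> has_above T i j"
  unfolding has_above_def by blast

lemma has_leftI: "j' < j \<Longrightarrow> (i, j') \<in> T \<Longrightarrow> has_left T i j"
  unfolding has_left_def by blast

lemma has_belowI: "i < i' \<Longrightarrow> (i', j) \<in> T \<Longrightarrow> has_below T i j"
  unfolding has_below_def by blast

lemma has_rightI: "j < j' \<Longrightarrow> (i, j') \<in> T \<Longrightarrow> has_right T i j"
  unfolding has_right_def by blast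

lemma has_above_converse: "has_above (T\<inverse>) i j = has_left T j i"
  and has_left_converse: "has_left (T\<inverse>) i j = has_above T j i"
  and has_below_converse: "has_below (T\<inverse>) i j = has_right T j i"
  and has_right_converse: "has_right (T\<inverse>) i j = has_below T j i"
  unfolding has_above_def has_left_def has_below_def has_right_def by auto

text \<open>The children of a vertex are the nearest vertex below it and the nearest vertex to its
  right, so the condition on the number of children says exactly that a vertex has a vertex
  below it iff it has one to its right.\<close>

definition is_cnm_local :: "nat \<Rightarrow> (nat \<times> nat) set \<Rightarrow> bool" where
  "is_cnm_local n T \<longleftrightarrow> T \<subseteq> {1..n} \<times> {1..n} \<and> (1, 1) \<in> T \<and>
     (\<forall>i j. (i, j) \<in> T \<longrightarrow> (i, j) \<noteq> (1, 1) \<longrightarrow> has_above T i j \<noteq> has_left T i j) \<and>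
     (\<forall>i\<in>{1..n}. \<exists>j. (i, j) \<in> T) \<and> (\<forall>j\<in>{1..n}. \<exists>i. (i, j) \<in> T) \<and>
     (\<forall>i j. (i, j) \<in> T \<longrightarrow> has_below T i j = has_right T i j)"

definition column_bottoms :: "(nat \<times> nat) set \<Rightarrow> (nat \<times> nat) set" where
  "column_bottoms T = {(i, j) \<in> T. \<not> has_below T i j}"

lemma mem_column_bottoms: "(i, j) \<in> column_bottoms T \<longleftrightarrow> (i, j) \<in> T \<and> \<not> has_below T i j"
  unfolding column_bottoms_def by simp

lemma column_bottoms_subset: "column_bottoms T \<subseteq> T"
  unfolding column_bottoms_def by auto

lemma Greatest_less_eq_iff:
  assumes "\<exists>k<a. Q k"
  shows "(GREATEST k. k < (a::nat) \<and> Q k) = i \<longleftrightarrow> i < a \<and> Q i \<and> (\<forall>k. i < k \<and> k < a \<longrightarrow> \<not> Q k)"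
proof -
  let ?G = "GREATEST k. k < a \<and> Q k"
  have bounded: "\<forall>y. y < a \<and> Q y \<longrightarrow> y \<le> a" by auto
  have G: "?G < a \<and> Q ?G"
    using GreatestI_nat[of "\<lambda>k. k < a \<and> Q k"] assms bounded by (metis (no_types, lifting))
  have "k \<le> ?G" if "k < a \<and> Q k" for k
    using Greatest_le_nat[of "\<lambda>k. k < a \<and> Q k"] bounded that by blast
  with G show ?thesis by (metis antisym_conv2 le_antisym not_le)
qed

lemma cnm_parent_eq_iff:
  assumes branch: "\<forall>i j. (i, j) \<in> T \<longrightarrow> (i, j) \<noteq> (1, 1) \<longrightarrow> has_above T i j \<noteq> has_left T i j"
    and v: "(a, b) \<in> T" "(a, b) \<noteq> (1, 1)"
  shows "cnm_parent T (a, b) = (i, j) \<longleftrightarrow>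
    (b = j \<and> i < a \<and> (i, j) \<in> T \<and> (\<forall>k. i < k \<and> k < a \<longrightarrow> (k, j) \<notin> T)) \<or>
    (a = i \<and> j < b \<and> (i, j) \<in> T \<and> \<not> has_above T a b \<and> (\<forall>k. j < k \<and> k < b \<longrightarrow> (i, k) \<notin> T))"
proof (cases "has_above T a b")
  case True
  then have "\<exists>k<a. (k, b) \<in> T" unfolding has_above_def .
  moreover from this have "cnm_parent T (a, b) = (GREATEST k. k < a \<and> (k, b) \<in> T, b)"
    unfolding cnm_parent_def by auto
  ultimately show ?thesis using Greatest_less_eq_iff[of a "\<lambda>k. (k, b) \<in> T" i] True by auto
next
  case False
  with branch v have "\<exists>k<b. (a, k) \<in> T" unfolding has_left_def by auto
  moreover have "cnm_parent T (a, b) = (a, GREATEST k. k < b \<and> (a, k) \<in> T)"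
    using False unfolding cnm_parent_def has_above_def by auto
  ultimately show ?thesis using Greatest_less_eq_iff[of b "\<lambda>k. (a, k) \<in> T" j] False
    unfolding has_above_def by auto
qed

definition nearest_below :: "(nat \<times> nat) set \<Rightarrow> nat \<Rightarrow> nat \<Rightarrow> (nat \<times> nat) set" where
  "nearest_below T i j = {(a, j) | a. (a, j) \<in> T \<and> i < a \<and> (\<forall>k. i < k \<and> k < a \<longrightarrow> (k, j) \<notin> T)}"

definition nearest_right :: "(nat \<times> nat) set \<Rightarrow> nat \<Rightarrow> nat \<Rightarrow> (nat \<times> nat) set" where
  "nearest_right T i j = {(i, b) | b. (i, b) \<in> T \<and> j < b \<and> (\<forall>k. j < k \<and> k < b \<longrightarrow> (i, k) \<notin> T)}"

lemma cnm_children_eq: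
  assumes branch: "\<forall>i j. (i, j) \<in> T \<longrightarrow> (i, j) \<noteq> (1, 1) \<longrightarrow> has_above T i j \<noteq> has_left T i j"
    and T: "T \<subseteq> {1..} \<times> {1..}" and v: "(i, j) \<in> T"
  shows "cnm_children T (i, j) = nearest_below T i j \<union> nearest_right T i j"
proof (intro equalityI subsetI)
  fix p assume "p \<in> cnm_children T (i, j)"
  then obtain a b where "p = (a, b)" "(a, b) \<in> T" "(a, b) \<noteq> (1, 1)" "cnm_parent T (a, b) = (i, j)"
    unfolding cnm_children_def by (cases p) auto
  then show "p \<in> nearest_below T i j \<union> nearest_right T i j"
    using cnm_parent_eq_iff[OF branch, of a b i j] unfolding nearest_below_def nearest_right_def by auto
next
  fix p assume p: "p \<in> nearest_below T i j \<union> nearest_right T i j"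
  have "1 \<le> i" "1 \<le> j" using T v by auto
  show "p \<in> cnm_children T (i, j)"
  proof (cases "p \<in> nearest_below T i j")
    case True
    then obtain a where a: "p = (a, j)" "(a, j) \<in> T" "i < a" "\<forall>k. i < k \<and> k < a \<longrightarrow> (k, j) \<notin> T"
      unfolding nearest_below_def by auto
    with \<open>1 \<le> i\<close> have ne: "(a, j) \<noteq> (1, 1)" by auto
    with a show ?thesis
      using cnm_parent_eq_iff[OF branch a(2) ne, of i j] v unfolding cnm_children_def by auto
  next
    case False
    with p obtain b where b: "p = (i, b)" "(i, b) \<in> T" "j < b" "\<forall>k. j < k \<and> k < b \<longrightarrow> (i, k) \<notin> T"
      unfolding nearest_right_def by auto
    with \<open>1 \<le> j\<close> have ne: "(i, b) \<noteq> (1, 1)" by auto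
    have "has_left T i b" using b v by (intro has_leftI)
    with branch b(2) ne have "\<not> has_above T i b" by auto
    with b ne show ?thesis
      using cnm_parent_eq_iff[OF branch b(2) ne, of i j] v unfolding cnm_children_def by auto
  qed
qed

lemma nearest_below_eq:
  "nearest_below T i j = (if has_below T i j then {(LEAST a. i < a \<and> (a, j) \<in> T, j)} else {})"
proof (cases "has_below T i j")
  case True
  let ?a = "LEAST a. i < a \<and> (a, j) \<in> T"
  have "i < ?a \<and> (?a, j) \<in> T"
    using True unfolding has_below_def by (metis (mono_tags, lifting) LeastI_ex)
  moreover have "?a \<le> a" if "i < a \<and> (a, j) \<in> T" for a using that by (rule Least_le)
  ultimately show ?thesis using True unfolding nearest_below_def
    by (auto, metis le_neq_implies_less, meson leD)
qed (auto simp: nearest_below_def has_below_def)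

lemma nearest_right_eq:
  "nearest_right T i j = (if has_right T i j then {(i, LEAST b. j < b \<and> (i, b) \<in> T)} else {})"
proof (cases "has_right T i j")
  case True
  let ?b = "LEAST b. j < b \<and> (i, b) \<in> T"
  have "j < ?b \<and> (i, ?b) \<in> T"
    using True unfolding has_right_def by (metis (mono_tags, lifting) LeastI_ex)
  moreover have "?b \<le> b" if "j < b \<and> (i, b) \<in> T" for b using that by (rule Least_le)
  ultimately show ?thesis using True unfolding nearest_right_def
    by (auto, metis le_neq_implies_less, meson leD)
qed (auto simp: nearest_right_def has_right_def)

lemma card_cnm_children:
  assumes "\<forall>i j. (i, j) \<in> T \<longrightarrow> (i, j) \<noteq> (1, 1) \<longrightarrow> has_above T i j \<noteq> has_left T i j"
    and "T \<subseteq> {1..} \<times> {1..}" and "(i, j) \<in> T"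
  shows "card (cnm_children T (i, j)) = of_bool (has_below T i j) + of_bool (has_right T i j)"
proof -
  have "nearest_below T i j \<inter> nearest_right T i j = {}"
    unfolding nearest_below_def nearest_right_def by auto
  then have "card (nearest_below T i j \<union> nearest_right T i j) =
      card (nearest_below T i j) + card (nearest_right T i j)"
    by (intro card_Un_disjoint) (simp_all add: nearest_below_eq nearest_right_eq)
  then show ?thesis unfolding cnm_children_eq[OF assms]
    by (simp add: nearest_below_eq nearest_right_eq)
qed

lemma is_cnm_iff_local: "is_cnm n T \<longleftrightarrow> is_cnm_local n T"
proof -
  have children_iff: "(\<forall>v\<in>T. card (cnm_children T v) = 0 \<or> card (cnm_children T v) = 2) \<longleftrightarrow>
        (\<forall>i j. (i, j) \<in> T \<longrightarrow> has_below T i j = has_right T i j)"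
    if branch: "\<forall>i j. (i, j) \<in> T \<longrightarrow> (i, j) \<noteq> (1, 1) \<longrightarrow> has_above T i j \<noteq> has_left T i j"
      and T: "T \<subseteq> {1..n} \<times> {1..n}"
  proof -
    have "T \<subseteq> {1..} \<times> {1..}" using T by auto
    then have "card (cnm_children T (i, j)) = 0 \<or> card (cnm_children T (i, j)) = 2 \<longleftrightarrow>
        has_below T i j = has_right T i j" if "(i, j) \<in> T" for i j
      using card_cnm_children[OF branch _ that] by simp
    then show ?thesis by auto
  qed
  have branch_iff: "(\<forall>(i, j)\<in>T. (i, j) \<noteq> (1, 1) \<longrightarrow>
        (\<exists>i'<i. (i', j) \<in> T) \<noteq> (\<exists>j'<j. (i, j') \<in> T)) \<longleftrightarrow>
      (\<forall>i j. (i, j) \<in> T \<longrightarrow> (i, j) \<noteq> (1, 1) \<longrightarrow> has_above T i j \<noteq> has_left T i j)"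
    unfolding has_above_def has_left_def by auto
  show ?thesis
    unfolding is_cnm_def is_cnm_local_def branch_iff using children_iff by (intro iffI) auto
qed

lemma leaf_matrix_eq_column_bottoms:
  assumes "is_cnm_local n T" shows "leaf_matrix T = column_bottoms T"
proof -
  have "cnm_children T (i, j) = {} \<longleftrightarrow> \<not> has_below T i j" if "(i, j) \<in> T" for i j
  proof -
    have "T \<subseteq> {1..} \<times> {1..}" using assms unfolding is_cnm_local_def by auto
    moreover have "has_below T i j = has_right T i j"
      using assms that unfolding is_cnm_local_def by blast
    ultimately show ?thesis using assms that unfolding is_cnm_local_def
      by (simp add: cnm_children_eq nearest_below_eq nearest_right_eq)
  qed
  then show ?thesis unfolding leaf_matrix_def column_bottoms_def by auto
qed

lemma is_cnm_localI:
  assumes "T \<subseteq> {1..n} \<times> {1..n}" "(1, 1) \<in> T"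
    "\<And>i j. (i, j) \<in> T \<Longrightarrow> (i, j) \<noteq> (1, 1) \<Longrightarrow> has_above T i j \<noteq> has_left T i j"
    "\<And>i. 1 \<le> i \<Longrightarrow> i \<le> n \<Longrightarrow> \<exists>j. (i, j) \<in> T"
    "\<And>j. 1 \<le> j \<Longrightarrow> j \<le> n \<Longrightarrow> \<exists>i. (i, j) \<in> T"
    "\<And>i j. (i, j) \<in> T \<Longrightarrow> has_below T i j = has_right T i j"
  shows "is_cnm_local n T"
  unfolding is_cnm_local_def using assms by auto

lemma
  assumes "is_cnm_local n T"
  shows cnm_bounds: "(i, j) \<in> T \<Longrightarrow> 1 \<le> i \<and> i \<le> n \<and> 1 \<le> j \<and> j \<le> n"
    and cnm_root: "(1, 1) \<in> T"
    and cnm_branch: "(i, j) \<in> T \<Longrightarrow> (i, j) \<noteq> (1, 1) \<Longrightarrow> has_above T i j \<noteq> has_left T i j"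
    and cnm_row: "1 \<le> i \<Longrightarrow> i \<le> n \<Longrightarrow> \<exists>j. (i, j) \<in> T"
    and cnm_column: "1 \<le> j \<Longrightarrow> j \<le> n \<Longrightarrow> \<exists>i. (i, j) \<in> T"
    and cnm_below_iff_right: "(i, j) \<in> T \<Longrightarrow> has_below T i j = has_right T i j"
    and cnm_finite: "finite T"
  using assms finite_subset[of T "{1..n} \<times> {1..n}"] unfolding is_cnm_local_def by auto

lemma cnm_positive_columns: "is_cnm_local n T \<Longrightarrow> T \<subseteq> UNIV \<times> {1..}"
  using cnm_bounds by fastforce

section \<open>Transposition and the leaf permutation\<close>

lemma is_cnm_local_converse: "is_cnm_local n (T\<inverse>) \<longleftrightarrow> is_cnm_local n T"
proof -
  have "is_cnm_local n (T\<inverse>)" if T: "is_cnm_local n T" for T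
  proof (rule is_cnm_localI)
    show "T\<inverse> \<subseteq> {1..n} \<times> {1..n}" using cnm_bounds[OF T] by auto
    show "(1, 1) \<in> T\<inverse>" using cnm_root[OF T] by simp
    show "has_above (T\<inverse>) i j \<noteq> has_left (T\<inverse>) i j" if "(i, j) \<in> T\<inverse>" "(i, j) \<noteq> (1, 1)" for i j
      using cnm_branch[OF T, of j i] that by (auto simp: has_above_converse has_left_converse)
    show "\<exists>j. (i, j) \<in> T\<inverse>" if "1 \<le> i" "i \<le> n" for i using cnm_column[OF T that] by auto
    show "\<exists>i. (i, j) \<in> T\<inverse>" if "1 \<le> j" "j \<le> n" for j using cnm_row[OF T that] by auto
    show "has_below (T\<inverse>) i j = has_right (T\<inverse>) i j" if "(i, j) \<in> T\<inverse>" for i j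
      using cnm_below_iff_right[OF T, of j i] that by (auto simp: has_below_converse has_right_converse)
  qed
  from this[of T] this[of "T\<inverse>"] show ?thesis by auto
qed

lemma column_bottoms_converse:
  assumes "is_cnm_local n T" shows "column_bottoms (T\<inverse>) = (column_bottoms T)\<inverse>"
  using cnm_below_iff_right[OF assms]
  by (auto simp: column_bottoms_def has_below_converse)

lemma ex1_column_bottom:
  assumes "finite T" "(i0, j) \<in> T" shows "\<exists>!i. (i, j) \<in> column_bottoms T"
proof -
  let ?m = "Max {i. (i, j) \<in> T}"
  have "{i. (i, j) \<in> T} \<subseteq> fst ` T" by force
  then have fin: "finite {i. (i, j) \<in> T}" using assms(1) finite_subset by blast
  then have m: "(?m, j) \<in> T" using Max_in assms(2) by auto
  have ge: "i \<le> ?m" if "(i, j) \<in> T" for i using Max_ge[OF fin] that by simp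
  show ?thesis
  proof (rule ex1I)
    show "(?m, j) \<in> column_bottoms T"
      using m ge unfolding mem_column_bottoms has_below_def by (auto simp: not_less[symmetric])
    show "i = ?m" if "(i, j) \<in> column_bottoms T" for i
      using that m ge[of i] unfolding mem_column_bottoms has_below_def by (auto simp: le_less)
  qed
qed

lemma is_perm_matrix_column_bottoms:
  assumes T: "is_cnm_local n T" shows "is_perm_matrix n (column_bottoms T)"
proof -
  have columns: "\<exists>!i. (i, j) \<in> column_bottoms T" if T: "is_cnm_local n T" and j: "j \<in> {1..n}" for T j
  proof -
    obtain i0 where "(i0, j) \<in> T" using cnm_column[OF T] j by auto
    then show ?thesis by (rule ex1_column_bottom[OF cnm_finite[OF T]])
  qed
  have "\<forall>i\<in>{1..n}. \<exists>!j. (i, j) \<in> column_bottoms T"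
    using columns[of "T\<inverse>"] T by (simp add: is_cnm_local_converse column_bottoms_converse)
  moreover have "column_bottoms T \<subseteq> {1..n} \<times> {1..n}"
    using cnm_bounds[OF T] unfolding column_bottoms_def by auto
  ultimately show ?thesis using columns[OF T] unfolding is_perm_matrix_def by blast
qed

lemma cnm_column2_top:
  assumes T: "is_cnm_local n T" and "2 \<le> n"
  obtains r where "(r, 1) \<in> T" "(r, 2) \<in> T"
proof -
  obtain i where "(i, 2) \<in> T" using cnm_column[OF T, of 2] \<open>2 \<le> n\<close> by auto
  define r where "r = (LEAST i. (i, 2) \<in> T)"
  have r: "(r, 2) \<in> T" unfolding r_def by (rule LeastI) fact
  have "\<not> has_above T r 2" unfolding has_above_def r_def using not_less_Least by blast
  with cnm_branch[OF T r] obtain j where j: "j < 2" "(r, j) \<in> T" unfolding has_left_def by auto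
  with cnm_bounds[OF T j(2)] have "j = 1" by simp
  with j r show thesis by (intro that) simp_all
qed

lemma cnm_root_has_below:
  assumes T: "is_cnm_local n T" and "2 \<le> n" shows "has_below T 1 1"
proof -
  obtain r where r: "(r, 1) \<in> T" "(r, 2) \<in> T" using cnm_column2_top[OF assms] .
  show ?thesis
  proof (cases "r = 1")
    case True
    then have "has_right T 1 1" using r(2) by (intro has_rightI[of _ 2]) auto
    then show ?thesis using cnm_below_iff_right[OF T cnm_root[OF T]] by simp
  next
    case False
    then show ?thesis using r(1) cnm_bounds[OF T r(1)] by (intro has_belowI[of _ r]) auto
  qed
qed

section \<open>Inserting a leaf at \<open>(2, 1)\<close>\<close>

text \<open>\<open>shift\<close> embeds an \<open>m \<times> m\<close> matrix into rows \<open>1, 3, 4, \<dots>, m + 1\<close> and columns \<open>2, \<dots>, m + 1\<close>;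
  the new row 2 and column 1 are filled by a single leaf at \<open>(2, 1)\<close>, which in a CNM is the
  second child of the root.\<close>

definition shift_row :: "nat \<Rightarrow> nat" where
  "shift_row i = (if i \<le> 1 then i else Suc i)"

definition shift :: "nat \<times> nat \<Rightarrow> nat \<times> nat" where
  "shift p = (shift_row (fst p), Suc (snd p))"

definition add_leaf21 :: "(nat \<times> nat) set \<Rightarrow> (nat \<times> nat) set" where
  "add_leaf21 P = insert (2, 1) (shift ` P)"

definition cnm_add_leaf21 :: "(nat \<times> nat) set \<Rightarrow> (nat \<times> nat) set" where
  "cnm_add_leaf21 T = insert (1, 1) (add_leaf21 T)"

lemma strict_mono_shift_row: "strict_mono shift_row"
  unfolding strict_mono_def shift_row_def by auto

lemma shift_row_eq_iff [simp]: "shift_row i = shift_row i' \<longleftrightarrow> i = i'"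
  using strict_mono_eq[OF strict_mono_shift_row] .

lemma shift_row_less_iff [simp]: "shift_row i' < shift_row i \<longleftrightarrow> i' < i"
  using strict_mono_less[OF strict_mono_shift_row] .

lemma shift_row_eq_1_iff [simp]: "shift_row i = 1 \<longleftrightarrow> i = 1"
  and shift_row_neq_2 [simp]: "shift_row i \<noteq> 2"
  unfolding shift_row_def by auto

lemma inj_shift: "inj shift"
  unfolding inj_def shift_def by auto

lemma mem_shift_image:
  "(a, b) \<in> shift ` S \<longleftrightarrow> (\<exists>i j. (i, j) \<in> S \<and> a = shift_row i \<and> b = Suc j)"
  unfolding shift_def by force

lemma shift_mem_shift_image [simp]: "(shift_row i, Suc j) \<in> shift ` S \<longleftrightarrow> (i, j) \<in> S"
  unfolding mem_shift_image by simp

lemma mem_cnm_add_leaf21: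
  "(a, b) \<in> cnm_add_leaf21 S \<longleftrightarrow> (a, b) = (1, 1) \<or> (a, b) = (2, 1) \<or> (a, b) \<in> shift ` S"
  unfolding cnm_add_leaf21_def add_leaf21_def by simp

lemma column_cnm_add_leaf21:
  "1 \<le> j \<Longrightarrow> (a, Suc j) \<in> cnm_add_leaf21 S \<longleftrightarrow> (\<exists>i. (i, j) \<in> S \<and> a = shift_row i)"
  unfolding mem_cnm_add_leaf21 mem_shift_image by auto

lemma row_cnm_add_leaf21:
  "(shift_row i, b) \<in> cnm_add_leaf21 S \<longleftrightarrow> (i = 1 \<and> b = 1) \<or> (\<exists>j. (i, j) \<in> S \<and> b = Suc j)"
  unfolding mem_cnm_add_leaf21 mem_shift_image by (auto simp: shift_row_def)

lemma has_above_cnm_add_leaf21: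
  assumes "1 \<le> j" shows "has_above (cnm_add_leaf21 S) (shift_row i) (Suc j) \<longleftrightarrow> has_above S i j"
proof -
  have "has_above (cnm_add_leaf21 S) (shift_row i) (Suc j) \<longleftrightarrow>
      (\<exists>i'. (i', j) \<in> S \<and> shift_row i' < shift_row i)"
    unfolding has_above_def column_cnm_add_leaf21[OF assms] by blast
  then show ?thesis unfolding has_above_def by auto
qed

lemma has_below_cnm_add_leaf21:
  assumes "1 \<le> j" shows "has_below (cnm_add_leaf21 S) (shift_row i) (Suc j) \<longleftrightarrow> has_below S i j"
proof -
  have "has_below (cnm_add_leaf21 S) (shift_row i) (Suc j) \<longleftrightarrow>
      (\<exists>i'. (i', j) \<in> S \<and> shift_row i < shift_row i')"
    unfolding has_below_def column_cnm_add_leaf21[OF assms] by blast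
  then show ?thesis unfolding has_below_def by auto
qed

lemma has_left_cnm_add_leaf21:
  "1 \<le> j \<Longrightarrow> has_left (cnm_add_leaf21 S) (shift_row i) (Suc j) \<longleftrightarrow> has_left S i j \<or> i = 1"
  unfolding has_left_def row_cnm_add_leaf21 by (cases "i = 1") (auto intro: exI[of _ 1])

lemma has_right_cnm_add_leaf21:
  "has_right (cnm_add_leaf21 S) (shift_row i) (Suc j) \<longleftrightarrow> has_right S i j"
  unfolding has_right_def row_cnm_add_leaf21 by auto

lemma cnm_add_leaf21_cases:
  assumes "(a, b) \<in> cnm_add_leaf21 S"
  obtains "(a, b) = (1, 1)" | "(a, b) = (2, 1)" | i j where "(i, j) \<in> S" "a = shift_row i" "b = Suc j"
  using assms unfolding mem_cnm_add_leaf21 mem_shift_image by blast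

context
  fixes S :: "(nat \<times> nat) set" and m :: nat
  assumes S: "S \<subseteq> {1..m} \<times> {1..m}"
begin

lemma not_has_above_row1: "\<not> has_above S 1 j"
proof -
  have "(0, j) \<notin> S" using S by auto
  then show ?thesis unfolding has_above_def by simp
qed

lemma column1_cnm_add_leaf21: "(a, 1) \<in> cnm_add_leaf21 S \<longleftrightarrow> a = 1 \<or> a = 2"
  using S unfolding mem_cnm_add_leaf21 mem_shift_image by auto

lemma leaf21_of_cnm_add_leaf21:
  "has_above (cnm_add_leaf21 S) 2 1" "\<not> has_left (cnm_add_leaf21 S) 2 1"
  "\<not> has_below (cnm_add_leaf21 S) 2 1" "\<not> has_right (cnm_add_leaf21 S) 2 1"
proof -
  show "has_above (cnm_add_leaf21 S) 2 1" by (rule has_aboveI[of 1]) (auto simp: mem_cnm_add_leaf21)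
  show "\<not> has_left (cnm_add_leaf21 S) 2 1"
    unfolding has_left_def mem_cnm_add_leaf21 mem_shift_image by auto
  show "\<not> has_below (cnm_add_leaf21 S) 2 1"
    unfolding has_below_def column1_cnm_add_leaf21 by auto
  show "\<not> has_right (cnm_add_leaf21 S) 2 1"
    unfolding has_right_def mem_cnm_add_leaf21 mem_shift_image by auto
qed

lemma root_of_cnm_add_leaf21:
  assumes "(1, 1) \<in> S"
  shows "has_below (cnm_add_leaf21 S) 1 1" "has_right (cnm_add_leaf21 S) 1 1"
proof -
  show "has_below (cnm_add_leaf21 S) 1 1"
    by (rule has_belowI[of _ 2]) (auto simp: mem_cnm_add_leaf21)
  have "shift (1, 1) = (1, 2)" by (simp add: shift_def shift_row_def)
  with assms have "(1, 2) \<in> cnm_add_leaf21 S" unfolding mem_cnm_add_leaf21 by (metis image_eqI)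
  then show "has_right (cnm_add_leaf21 S) 1 1" by (rule has_rightI[rotated]) simp
qed

lemma is_cnm_local_of_cnm_add_leaf21:
  assumes root: "(1, 1) \<in> S" and T: "is_cnm_local (Suc m) (cnm_add_leaf21 S)"
  shows "is_cnm_local m S"
proof (rule is_cnm_localI[OF S root])
  fix i j assume ij: "(i, j) \<in> S" "(i, j) \<noteq> (1, 1)"
  have "1 \<le> j" using S ij(1) by auto
  show "has_above S i j \<noteq> has_left S i j"
  proof (cases "i = 1")
    case True
    with ij(2) have "j \<noteq> 1" by simp
    with \<open>1 \<le> j\<close> True root have "has_left S i j" by (intro has_leftI[of 1]) auto
    with not_has_above_row1 True show ?thesis by simp
  next
    case False
    have "(shift_row i, Suc j) \<in> cnm_add_leaf21 S" using ij(1) unfolding row_cnm_add_leaf21 by blast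
    from cnm_branch[OF T this] False \<open>1 \<le> j\<close> show ?thesis
      by (simp add: has_above_cnm_add_leaf21 has_left_cnm_add_leaf21)
  qed
next
  fix i assume i: "1 \<le> i" "i \<le> m"
  show "\<exists>j. (i, j) \<in> S"
  proof (cases "i = 1")
    case False
    with i have "1 \<le> shift_row i" "shift_row i \<le> Suc m" by (auto simp: shift_row_def)
    then obtain b where "(shift_row i, b) \<in> cnm_add_leaf21 S" using cnm_row[OF T] by blast
    with False show ?thesis unfolding row_cnm_add_leaf21 by blast
  qed (use root in blast)
next
  fix j assume "1 \<le> j" "j \<le> m"
  with cnm_column[OF T, of "Suc j"] show "\<exists>i. (i, j) \<in> S"
    unfolding column_cnm_add_leaf21[OF \<open>1 \<le> j\<close>] by auto
next
  fix i j assume ij: "(i, j) \<in> S"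
  then have "(shift_row i, Suc j) \<in> cnm_add_leaf21 S" unfolding row_cnm_add_leaf21 by blast
  moreover have "1 \<le> j" using S ij by auto
  ultimately show "has_below S i j = has_right S i j"
    using cnm_below_iff_right[OF T] has_below_cnm_add_leaf21 has_right_cnm_add_leaf21 by metis
qed

end

lemma is_cnm_local_cnm_add_leaf21:
  assumes S': "is_cnm_local m S" shows "is_cnm_local (Suc m) (cnm_add_leaf21 S)"
proof -
  have S: "S \<subseteq> {1..m} \<times> {1..m}" using S' by (simp add: is_cnm_local_def)
  have root: "(1, 1) \<in> S" by (rule cnm_root[OF S'])
  have m: "1 \<le> m" using S root by auto
  show ?thesis
  proof (rule is_cnm_localI)
    show "cnm_add_leaf21 S \<subseteq> {1..Suc m} \<times> {1..Suc m}"
      using S m by (fastforce simp: mem_cnm_add_leaf21 mem_shift_image shift_row_def)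
    show "(1, 1) \<in> cnm_add_leaf21 S" by (simp add: mem_cnm_add_leaf21)
  next
    fix a b assume ab: "(a, b) \<in> cnm_add_leaf21 S" "(a, b) \<noteq> (1, 1)"
    from ab(1) show "has_above (cnm_add_leaf21 S) a b \<noteq> has_left (cnm_add_leaf21 S) a b"
    proof (cases rule: cnm_add_leaf21_cases)
      case (3 i j)
      then have "1 \<le> j" using S by auto
      with 3 have "has_above (cnm_add_leaf21 S) a b = has_above S i j"
        "has_left (cnm_add_leaf21 S) a b = (has_left S i j \<or> i = 1)"
        by (simp_all add: has_above_cnm_add_leaf21 has_left_cnm_add_leaf21)
      with cnm_branch[OF S' 3(1)] not_has_above_row1[OF S] show ?thesis by (cases "i = 1") auto
    qed (use ab(2) leaf21_of_cnm_add_leaf21[OF S] in auto)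
  next
    fix a assume a: "1 \<le> a" "a \<le> Suc m"
    show "\<exists>b. (a, b) \<in> cnm_add_leaf21 S"
    proof (cases "a \<le> 2")
      case True
      with a show ?thesis by (auto simp: mem_cnm_add_leaf21)
    next
      case False
      with a have "1 \<le> a - 1" "a - 1 \<le> m" by auto
      then obtain j where "(a - 1, j) \<in> S" using cnm_row[OF S'] by blast
      moreover have "shift_row (a - 1) = a" using False by (simp add: shift_row_def)
      ultimately show ?thesis unfolding mem_cnm_add_leaf21 mem_shift_image by metis
    qed
  next
    fix b assume b: "1 \<le> b" "b \<le> Suc m"
    show "\<exists>a. (a, b) \<in> cnm_add_leaf21 S"
    proof (cases "b = 1")
      case False
      with b have "1 \<le> b - 1" "b - 1 \<le> m" by auto
      then obtain i where "(i, b - 1) \<in> S" using cnm_column[OF S'] by blast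
      moreover have "b = Suc (b - 1)" using False b by simp
      ultimately show ?thesis unfolding mem_cnm_add_leaf21 mem_shift_image by metis
    qed (auto simp: mem_cnm_add_leaf21)
  next
    fix a b assume "(a, b) \<in> cnm_add_leaf21 S"
    then show "has_below (cnm_add_leaf21 S) a b = has_right (cnm_add_leaf21 S) a b"
    proof (cases rule: cnm_add_leaf21_cases)
      case (3 i j)
      then have "1 \<le> j" using S by auto
      with 3 cnm_below_iff_right[OF S' 3(1)] show ?thesis
        by (simp add: has_below_cnm_add_leaf21 has_right_cnm_add_leaf21)
    qed (use leaf21_of_cnm_add_leaf21[OF S] root_of_cnm_add_leaf21[OF S root] in auto)
  qed
qed

lemma column_bottoms_cnm_add_leaf21:
  assumes S': "is_cnm_local m S"
  shows "column_bottoms (cnm_add_leaf21 S) = add_leaf21 (column_bottoms S)"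
proof -
  have S: "S \<subseteq> {1..m} \<times> {1..m}" using S' by (simp add: is_cnm_local_def)
  show ?thesis
  proof (intro set_eqI iffI)
    fix p assume "p \<in> column_bottoms (cnm_add_leaf21 S)"
    then obtain a b where p: "p = (a, b)" "(a, b) \<in> cnm_add_leaf21 S" "\<not> has_below (cnm_add_leaf21 S) a b"
      unfolding column_bottoms_def by blast
    from p(2) show "p \<in> add_leaf21 (column_bottoms S)"
    proof (cases rule: cnm_add_leaf21_cases)
      case (3 i j)
      then have "1 \<le> j" using S by auto
      with 3 p show ?thesis
        by (auto simp: add_leaf21_def mem_column_bottoms has_below_cnm_add_leaf21)
    qed (use p root_of_cnm_add_leaf21[OF S cnm_root[OF S']] in \<open>auto simp: add_leaf21_def\<close>)
  next
    fix p assume "p \<in> add_leaf21 (column_bottoms S)"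
    then consider "p = (2, 1)" | i j where "(i, j) \<in> S" "\<not> has_below S i j" "p = (shift_row i, Suc j)"
      unfolding add_leaf21_def column_bottoms_def shift_def by auto
    then show "p \<in> column_bottoms (cnm_add_leaf21 S)"
    proof cases
      case 2
      then have "1 \<le> j" using S by auto
      with 2 show ?thesis by (simp add: mem_column_bottoms has_below_cnm_add_leaf21 row_cnm_add_leaf21)
    qed (use leaf21_of_cnm_add_leaf21[OF S] in \<open>simp add: mem_column_bottoms mem_cnm_add_leaf21\<close>)
  qed
qed

lemma shift_image_eq_add_leaf21_Diff:
  assumes "P \<subseteq> UNIV \<times> {1..}"
  shows "shift ` P = add_leaf21 P - {(2, 1)}" "shift ` P = cnm_add_leaf21 P - {(1, 1), (2, 1)}"
  using assms unfolding cnm_add_leaf21_def add_leaf21_def by (auto simp: shift_def)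

lemma add_leaf21_eq_iff:
  assumes "P \<subseteq> UNIV \<times> {1..}" "Q \<subseteq> UNIV \<times> {1..}"
  shows "add_leaf21 P = add_leaf21 Q \<longleftrightarrow> P = Q"
  using shift_image_eq_add_leaf21_Diff(1)[OF assms(1)] shift_image_eq_add_leaf21_Diff(1)[OF assms(2)]
    inj_image_eq_iff[OF inj_shift] by metis

lemma cnm_add_leaf21_eq_iff:
  assumes "S \<subseteq> UNIV \<times> {1..}" "S' \<subseteq> UNIV \<times> {1..}"
  shows "cnm_add_leaf21 S = cnm_add_leaf21 S' \<longleftrightarrow> S = S'"
  using shift_image_eq_add_leaf21_Diff(2)[OF assms(1)] shift_image_eq_add_leaf21_Diff(2)[OF assms(2)]
    inj_image_eq_iff[OF inj_shift] by metis

text \<open>Conversely, a CNM in which \<open>(2, 1)\<close> is a leaf has nothing else in row 2 or below it in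
  column 1, so deleting row 2 and column 1 leaves a CNM.\<close>

lemma cnm_with_leaf21_obtains:
  assumes T: "is_cnm_local (Suc m) T" and leaf: "(2, 1) \<in> column_bottoms T"
  obtains S where "is_cnm_local m S" "T = cnm_add_leaf21 S"
proof -
  have t21: "(2, 1) \<in> T" and "\<not> has_below T 2 1" using leaf unfolding mem_column_bottoms by auto
  then have "\<not> has_right T 2 1" using cnm_below_iff_right[OF T t21] by simp
  have column1: "a \<le> 2" if "(a, 1) \<in> T" for a
    using \<open>\<not> has_below T 2 1\<close> that has_belowI[of 2 a 1 T] by (meson not_le)
  have row2: "b \<le> 1" if "(2, b) \<in> T" for b
    using \<open>\<not> has_right T 2 1\<close> that has_rightI[of 1 b 2 T] by (meson not_le)
  have m: "1 \<le> m" using cnm_bounds[OF T t21] by simp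
  define S where "S = {(i, j). 1 \<le> j \<and> (shift_row i, Suc j) \<in> T}"
  have S_bounds: "S \<subseteq> {1..m} \<times> {1..m}"
  proof
    fix p assume "p \<in> S"
    then obtain i j where p: "p = (i, j)" "(i, j) \<in> S" by (cases p) auto
    then have "1 \<le> j" "1 \<le> shift_row i" "shift_row i \<le> Suc m" "Suc j \<le> Suc m"
      using cnm_bounds[OF T] unfolding S_def by auto
    with m p(1) show "p \<in> {1..m} \<times> {1..m}"
      by (auto simp: shift_row_def split: if_splits)
  qed
  obtain r where r: "(r, 1) \<in> T" "(r, 2) \<in> T" using cnm_column2_top[OF T] m by auto
  have "r \<noteq> 2" using row2[of 2] r(2) by auto
  with column1[OF r(1)] cnm_bounds[OF T r(1)] have "r = 1" by linarith
  with r have "(1, 2) \<in> T" by simp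
  then have root: "(1, 1) \<in> S" unfolding S_def by (simp add: shift_row_def numeral_2_eq_2)
  have "T = cnm_add_leaf21 S"
  proof (intro set_eqI iffI)
    fix p assume "p \<in> T"
    then obtain a b where p: "p = (a, b)" "(a, b) \<in> T" by (cases p) auto
    show "p \<in> cnm_add_leaf21 S"
    proof (cases "b = 1")
      case True
      with p column1[of a] cnm_bounds[OF T p(2)] have "a = 1 \<or> a = 2" by auto
      with True p(1) show ?thesis by (auto simp: mem_cnm_add_leaf21)
    next
      case False
      with cnm_bounds[OF T p(2)] have b: "2 \<le> b" and a: "1 \<le> a" by auto
      have "a \<noteq> 2" using row2[of b] p(2) b by auto
      define i where "i = (if a = 1 then 1 else a - 1)"
      have "(a, b) = shift (i, b - 1)" using a b \<open>a \<noteq> 2\<close> by (auto simp: i_def shift_def shift_row_def)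
      moreover have "(i, b - 1) \<in> S" using b p(2) calculation unfolding S_def shift_def by auto
      ultimately show ?thesis using p(1) unfolding cnm_add_leaf21_def add_leaf21_def by simp
    qed
  next
    fix p assume "p \<in> cnm_add_leaf21 S"
    then show "p \<in> T"
      using t21 cnm_root[OF T] unfolding cnm_add_leaf21_def add_leaf21_def S_def shift_def by auto
  qed
  moreover have "is_cnm_local m S"
    using T calculation is_cnm_local_of_cnm_add_leaf21[OF S_bounds root] by simp
  ultimately show thesis by (intro that)
qed

section \<open>Moving a vertex without changing the leaves\<close>

context
  fixes T :: "(nat \<times> nat) set" and x y :: "nat \<times> nat" and i j :: nat
begin

lemma has_above_insert_Diff:
  assumes "snd x = j \<Longrightarrow> fst x < i \<Longrightarrow> has_above (insert y (T - {x})) i j"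
    and "snd y = j \<Longrightarrow> fst y < i \<Longrightarrow> has_above T i j"
  shows "has_above (insert y (T - {x})) i j = has_above T i j"
  using assms unfolding has_above_def by (cases x, cases y) auto

lemma has_left_insert_Diff:
  assumes "fst x = i \<Longrightarrow> snd x < j \<Longrightarrow> has_left (insert y (T - {x})) i j"
    and "fst y = i \<Longrightarrow> snd y < j \<Longrightarrow> has_left T i j"
  shows "has_left (insert y (T - {x})) i j = has_left T i j"
  using assms unfolding has_left_def by (cases x, cases y) auto

lemma has_below_insert_Diff:
  assumes "snd x = j \<Longrightarrow> i < fst x \<Longrightarrow> has_below (insert y (T - {x})) i j"
    and "snd y = j \<Longrightarrow> i < fst y \<Longrightarrow> has_below T i j"
  shows "has_below (insert y (T - {x})) i j = has_below T i j"
  using assms unfolding has_below_def by (cases x, cases y) auto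

lemma has_right_insert_Diff:
  assumes "fst x = i \<Longrightarrow> j < snd x \<Longrightarrow> has_right (insert y (T - {x})) i j"
    and "fst y = i \<Longrightarrow> j < snd y \<Longrightarrow> has_right T i j"
  shows "has_right (insert y (T - {x})) i j = has_right T i j"
  using assms unfolding has_right_def by (cases x, cases y) auto

end

lemma cnm_replace_vertex:
  assumes T: "is_cnm_local n T" and T': "T' = insert y (T - {x})"
    and x: "x \<in> T" "x \<noteq> (1, 1)" "x \<notin> column_bottoms T"
    and y: "y \<notin> T" "y \<in> {1..n} \<times> {1..n}"
    and row_x: "\<exists>j. (fst x, j) \<in> T'" and column_x: "\<exists>i. (i, snd x) \<in> T'"
    and branch: "\<And>i j. (i, j) \<in> T' \<Longrightarrow> (i, j) \<noteq> (1, 1) \<Longrightarrow> has_above T' i j \<noteq> has_left T' i j"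
    and y_inner: "has_below T' (fst y) (snd y)" "has_right T' (fst y) (snd y)"
    and below: "\<And>i j. (i, j) \<in> T - {x} \<Longrightarrow> has_below T' i j = has_below T i j"
    and right: "\<And>i j. (i, j) \<in> T - {x} \<Longrightarrow> has_right T' i j = has_right T i j"
  shows "is_cnm_local n T' \<and> column_bottoms T' = column_bottoms T \<and> T' \<noteq> T"
proof (intro conjI)
  have others: "(i, j) \<in> T - {x}" if "(i, j) \<in> T'" "(i, j) \<noteq> y" for i j
    using that T' by auto
  show "is_cnm_local n T'"
  proof (rule is_cnm_localI[OF _ _ branch])
    have "T \<subseteq> {1..n} \<times> {1..n}" using T by (simp add: is_cnm_local_def)
    with y(2) show "T' \<subseteq> {1..n} \<times> {1..n}" unfolding T' by blast
    show "(1, 1) \<in> T'" using cnm_root[OF T] x(2) T' by auto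
    show "\<exists>j. (i, j) \<in> T'" if i: "1 \<le> i" "i \<le> n" for i
    proof -
      obtain j where "(i, j) \<in> T" using cnm_row[OF T i] by blast
      with row_x show ?thesis unfolding T' by (cases "(i, j) = x") force+
    qed
    show "\<exists>i. (i, j) \<in> T'" if j: "1 \<le> j" "j \<le> n" for j
    proof -
      obtain i where "(i, j) \<in> T" using cnm_column[OF T j] by blast
      with column_x show ?thesis unfolding T' by (cases "(i, j) = x") force+
    qed
    show "has_below T' i j = has_right T' i j" if "(i, j) \<in> T'" for i j
    proof (cases "(i, j) = y")
      case True with y_inner show ?thesis by auto
    next
      case False
      with others[OF that] below right cnm_below_iff_right[OF T] show ?thesis by auto
    qed
  qed (simp_all)
  show "column_bottoms T' = column_bottoms T"
  proof (intro set_eqI)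
    fix p :: "nat \<times> nat"
    obtain i j where p: "p = (i, j)" by (cases p)
    consider "p = x" | "p = y" | "p \<in> T - {x}" "p \<noteq> y" | "p \<notin> T" "p \<notin> T'"
      using T' by blast
    then show "p \<in> column_bottoms T' \<longleftrightarrow> p \<in> column_bottoms T"
    proof cases
      case 1 with x y(1) T' show ?thesis by (auto simp: column_bottoms_def)
    next
      case 2 with x(1) y(1) y_inner(1) T' show ?thesis by (cases y) (auto simp: mem_column_bottoms)
    next
      case 3 with below[of i j] T' show ?thesis unfolding p by (simp add: mem_column_bottoms)
    qed (simp add: p mem_column_bottoms)
  qed
  show "T' \<noteq> T" using y(1) T' by auto
qed

text \<open>If both children of the root are inner vertices, \<open>(2, 2)\<close> is free and \<open>(2, 1)\<close> can be moved
  there.\<close>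

lemma cnm_move_vertex21:
  assumes T: "is_cnm_local n T" and t12: "(1, 2) \<in> T" and t21: "(2, 1) \<in> T"
    and inner: "(2, 1) \<notin> column_bottoms T" "(1, 2) \<notin> column_bottoms T"
  shows "\<exists>T'. is_cnm_local n T' \<and> column_bottoms T' = column_bottoms T \<and> T' \<noteq> T"
proof -
  have t11: "(1, 1) \<in> T" by (rule cnm_root[OF T])
  have bounds: "\<And>i j. (i, j) \<in> T \<Longrightarrow> 1 \<le> i \<and> i \<le> n \<and> 1 \<le> j \<and> j \<le> n" by (rule cnm_bounds[OF T])
  have n22: "(2, 2) \<notin> T"
  proof
    assume t22: "(2, 2) \<in> T"
    have "has_above T 2 2" "has_left T 2 2"
      using has_aboveI[of 1 2 2 T] has_leftI[of 1 2 2 T] t12 t21 by simp_all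
    with cnm_branch[OF T t22] show False by simp
  qed
  from inner(1) t21 obtain a1 where a1: "2 < a1" "(a1, 1) \<in> T"
    unfolding mem_column_bottoms has_below_def by auto
  from inner(1) t21 cnm_below_iff_right[OF T t21] obtain b1 where b1: "1 < b1" "(2, b1) \<in> T"
    unfolding mem_column_bottoms has_right_def by auto
  with n22 have "b1 \<noteq> 2" by auto
  from inner(2) t12 obtain a2 where a2: "1 < a2" "(a2, 2) \<in> T"
    unfolding mem_column_bottoms has_below_def by auto
  with n22 have "a2 \<noteq> 2" by auto
  define T' where "T' = insert (2, 2) (T - {(2, 1)})"
  have above: "has_above T' i j = has_above T i j" if "(i, j) \<in> T - {(2, 1)}" for i j
  proof (unfold T'_def, rule has_above_insert_Diff)
    assume "snd (2, 1) = j" "fst (2, 1) < i"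
    with t11 show "has_above (insert (2, 2) (T - {(2, 1)})) i j" by (intro has_aboveI[of 1]) auto
  next
    assume "snd (2, 2) = j" "fst (2, 2) < i"
    with t12 show "has_above T i j" by (intro has_aboveI[of 1]) auto
  qed
  have left: "has_left T' i j = has_left T i j" if "(i, j) \<in> T - {(2, 1)}" for i j
  proof (unfold T'_def, rule has_left_insert_Diff)
    assume "fst (2, 1) = i" "snd (2, 1) < j"
    with that have "i = 2" "1 < j" "(2, j) \<in> T" by auto
    moreover from this n22 have "j \<noteq> 2" by auto
    ultimately show "has_left (insert (2, 2) (T - {(2, 1)})) i j" by (intro has_leftI[of 2]) auto
  qed (use t21 in \<open>auto intro: has_leftI[of 1]\<close>)
  have below: "has_below T' i j = has_below T i j" if "(i, j) \<in> T - {(2, 1)}" for i j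
  proof (unfold T'_def, rule has_below_insert_Diff)
    assume "snd (2, 1) = j" "i < fst (2, 1)"
    with that bounds[of i j] have "(i, j) = (1, 1)" by auto
    with a1 show "has_below (insert (2, 2) (T - {(2, 1)})) i j" by (auto intro: has_belowI[of _ a1])
  qed (use a2 in \<open>auto intro: has_belowI[of _ a2]\<close>)
  have right: "has_right T' i j = has_right T i j" if "(i, j) \<in> T - {(2, 1)}" for i j
    unfolding T'_def by (rule has_right_insert_Diff) (use that bounds[of i j] in auto)
  show ?thesis
  proof (rule exI, rule cnm_replace_vertex[OF T T'_def t21 _ inner(1) n22])
    show "(2::nat, 2::nat) \<in> {1..n} \<times> {1..n}" using bounds[OF b1(2)] by simp
    show "\<exists>j. (fst (2::nat, 1::nat), j) \<in> T'" "\<exists>i. (i, snd (2::nat, 1::nat)) \<in> T'"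
      using t11 unfolding T'_def by auto
    show "has_below T' (fst (2, 2)) (snd (2, 2))" "has_right T' (fst (2, 2)) (snd (2, 2))"
      using a2 \<open>a2 \<noteq> 2\<close> b1 \<open>b1 \<noteq> 2\<close> unfolding T'_def
      by (auto intro: has_belowI[of _ a2] has_rightI[of _ b1])
    show "has_above T' i j \<noteq> has_left T' i j" if "(i, j) \<in> T'" "(i, j) \<noteq> (1, 1)" for i j
    proof (cases "(i, j) = (2, 2)")
      case True
      have "has_above T' 2 2" using t12 unfolding T'_def by (auto intro: has_aboveI[of 1])
      moreover have "\<not> has_left T' 2 2"
      proof
        assume "has_left T' 2 2"
        then obtain j' where "j' < 2" "(2, j') \<in> T" "j' \<noteq> 1" unfolding T'_def has_left_def by auto
        with bounds[of 2 j'] show False by auto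
      qed
      ultimately show ?thesis using True by simp
    next
      case False
      with that have "(i, j) \<in> T - {(2, 1)}" unfolding T'_def by auto
      with above left cnm_branch[OF T] that(2) show ?thesis by auto
    qed
  qed (use below right in auto)
qed

text \<open>If \<open>(2, 1)\<close> is not a vertex, the first vertex \<open>(2, c)\<close> of row 2 hangs below \<open>(1, c)\<close>, and
  \<open>(1, c)\<close> can be moved to \<open>(2, 1)\<close>, which then becomes the parent of \<open>(2, c)\<close>.\<close>

lemma cnm_move_vertex1c:
  assumes T: "is_cnm_local n T" and n: "2 \<le> n" and n21: "(2, 1) \<notin> T"
  shows "\<exists>T'. is_cnm_local n T' \<and> column_bottoms T' = column_bottoms T \<and> T' \<noteq> T"
proof -
  have t11: "(1, 1) \<in> T" by (rule cnm_root[OF T])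
  have bounds: "\<And>i j. (i, j) \<in> T \<Longrightarrow> 1 \<le> i \<and> i \<le> n \<and> 1 \<le> j \<and> j \<le> n" by (rule cnm_bounds[OF T])
  obtain j0 where "(2, j0) \<in> T" using cnm_row[OF T, of 2] n by auto
  define c where "c = (LEAST j. (2, j) \<in> T)"
  have t2c: "(2, c) \<in> T" unfolding c_def by (rule LeastI) fact
  have c_min: "c \<le> j" if "(2, j) \<in> T" for j unfolding c_def using that by (rule Least_le)
  have "c \<noteq> 1" using n21 t2c by auto
  with bounds[OF t2c] have c: "1 < c" by simp
  have "\<not> has_left T 2 c" using c_min unfolding has_left_def by (auto simp: not_less[symmetric])
  with cnm_branch[OF T t2c] obtain i' where i': "i' < 2" "(i', c) \<in> T" unfolding has_above_def by auto
  with bounds[OF i'(2)] have "i' = 1" by simp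
  with i' have t1c: "(1, c) \<in> T" by simp
  obtain a0 where a0: "1 < a0" "(a0, 1) \<in> T"
    using cnm_root_has_below[OF T n] unfolding has_below_def by auto
  with n21 have "a0 \<noteq> 2" by auto
  have "has_below T 1 c" using t2c by (intro has_belowI[of _ 2]) auto
  with cnm_below_iff_right[OF T t1c] obtain b where b: "c < b" "(1, b) \<in> T"
    unfolding has_right_def by auto
  define T' where "T' = insert (2, 1) (T - {(1, c)})"
  have above: "has_above T' i j = has_above T i j" if "(i, j) \<in> T - {(1, c), (2, c)}" for i j
  proof (unfold T'_def, rule has_above_insert_Diff)
    assume "snd (1, c) = j" "fst (1, c) < i"
    with that t2c show "has_above (insert (2, 1) (T - {(1, c)})) i j" by (intro has_aboveI[of 2]) auto
  next
    assume "snd (2, 1) = j" "fst (2, 1) < i"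
    with t11 show "has_above T i j" by (intro has_aboveI[of 1]) auto
  qed
  have left: "has_left T' i j = has_left T i j" if "(i, j) \<in> T - {(1, c), (2, c)}" for i j
  proof (unfold T'_def, rule has_left_insert_Diff)
    assume "fst (1, c) = i" "snd (1, c) < j"
    with t11 c show "has_left (insert (2, 1) (T - {(1, c)})) i j" by (intro has_leftI[of 1]) auto
  next
    assume "fst (2, 1) = i" "snd (2, 1) < j"
    with that c_min[of j] have "c < j" "i = 2" by force+
    with t2c show "has_left T i j" by (intro has_leftI[of c]) auto
  qed
  have below: "has_below T' i j = has_below T i j" if "(i, j) \<in> T - {(1, c)}" for i j
  proof (unfold T'_def, rule has_below_insert_Diff)
    assume "snd (2, 1) = j" "i < fst (2, 1)"
    with that bounds[of i j] have "(i, j) = (1, 1)" by auto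
    with a0 \<open>a0 \<noteq> 2\<close> show "has_below T i j" by (intro has_belowI[of _ a0]) auto
  qed (use that bounds[of i j] in auto)
  have right: "has_right T' i j = has_right T i j" if "(i, j) \<in> T - {(1, c)}" for i j
  proof (unfold T'_def, rule has_right_insert_Diff)
    assume "fst (1, c) = i" "j < snd (1, c)"
    with b show "has_right (insert (2, 1) (T - {(1, c)})) i j" by (intro has_rightI[of _ b]) auto
  qed (use that bounds[of i j] in auto)
  show ?thesis
  proof (rule exI, rule cnm_replace_vertex[OF T T'_def t1c _ _ n21])
    show "(1, c) \<noteq> (1, 1)" using c by simp
    show "(1, c) \<notin> column_bottoms T" using \<open>has_below T 1 c\<close> by (simp add: mem_column_bottoms)
    show "(2::nat, 1::nat) \<in> {1..n} \<times> {1..n}" using n by simp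
    show "\<exists>j. (fst (1::nat, c), j) \<in> T'" "\<exists>i. (i, snd (1::nat, c)) \<in> T'"
      using t11 t2c c unfolding T'_def by auto
    show "has_below T' (fst (2, 1)) (snd (2, 1))" "has_right T' (fst (2, 1)) (snd (2, 1))"
      using a0 \<open>a0 \<noteq> 2\<close> t2c c unfolding T'_def
      by (auto intro: has_belowI[of _ a0] has_rightI[of _ c])
    show "has_above T' i j \<noteq> has_left T' i j" if v: "(i, j) \<in> T'" "(i, j) \<noteq> (1, 1)" for i j
    proof (cases "(i, j) = (2, 1)")
      case True
      have "has_above T' 2 1" using t11 c unfolding T'_def by (intro has_aboveI[of 1]) auto
      moreover have "\<not> has_left T' 2 1"
      proof
        assume "has_left T' 2 1"
        then obtain j' where "j' < 1" "(2, j') \<in> T" unfolding T'_def has_left_def by auto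
        with bounds[of 2 j'] show False by simp
      qed
      ultimately show ?thesis using True by simp
    next
      case False
      with v(1) have "(i, j) \<in> T - {(1, c)}" unfolding T'_def by blast
      show ?thesis
      proof (cases "(i, j) = (2, c)")
        case True
        have "has_left T' 2 c" using c unfolding T'_def by (intro has_leftI[of 1]) auto
        moreover have "\<not> has_above T' 2 c"
        proof
          assume "has_above T' 2 c"
          then obtain i' where "i' < 2" "(i', c) \<in> T" "i' \<noteq> 1"
            using c unfolding T'_def has_above_def by auto
          with bounds[of i' c] show False by auto
        qed
        ultimately show ?thesis using True by simp
      next
        case False
        with \<open>(i, j) \<in> T - {(1, c)}\<close> have "(i, j) \<in> T - {(1, c), (2, c)}" by blast
        with above left cnm_branch[OF T] v(2) show ?thesis by auto
      qed
    qed
  qed (use below right in auto)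
qed

lemma cnm_other_with_same_leaves:
  assumes T: "is_cnm_local n T" and n: "2 \<le> n"
    and inner: "(2, 1) \<notin> column_bottoms T" "(1, 2) \<notin> column_bottoms T"
  shows "\<exists>T'. is_cnm_local n T' \<and> column_bottoms T' = column_bottoms T \<and> T' \<noteq> T"
proof -
  consider "(2, 1) \<notin> T" | "(2, 1) \<in> T" "(1, 2) \<in> T" | "(1, 2) \<notin> T" by blast
  then show ?thesis
  proof cases
    case 1 with cnm_move_vertex1c[OF T n] show ?thesis .
  next
    case 2 with cnm_move_vertex21[OF T _ _ inner] show ?thesis by blast
  next
    case 3
    then have "(2, 1) \<notin> T\<inverse>" by simp
    moreover have "is_cnm_local n (T\<inverse>)" using T by (simp add: is_cnm_local_converse)
    ultimately obtain T' where
      T': "is_cnm_local n T'" "column_bottoms T' = column_bottoms (T\<inverse>)" "T' \<noteq> T\<inverse>"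
      using cnm_move_vertex1c n by blast
    have "column_bottoms (T'\<inverse>) = column_bottoms T"
      using column_bottoms_converse[OF T'(1)] T'(2) column_bottoms_converse[OF T] by simp
    moreover have "T'\<inverse> \<noteq> T" using T'(3) by auto
    ultimately show ?thesis using T'(1) is_cnm_local_converse by blast
  qed
qed

section \<open>Counting the leaf matrices with a unique CNM\<close>

definition unique_leaf_matrices :: "nat \<Rightarrow> (nat \<times> nat) set set" where
  "unique_leaf_matrices n = {P. \<exists>!T. is_cnm_local n T \<and> column_bottoms T = P}"

definition add_leaf12 :: "(nat \<times> nat) set \<Rightarrow> (nat \<times> nat) set" where
  "add_leaf12 P = (add_leaf21 (P\<inverse>))\<inverse>"

lemma unique_leaf_matrices_eq:
  "{P. is_perm_matrix n P \<and> (\<exists>!T. is_cnm n T \<and> leaf_matrix T = P)} = unique_leaf_matrices n"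
  unfolding unique_leaf_matrices_def
proof (rule Collect_cong)
  fix P
  have "(is_cnm n T \<and> leaf_matrix T = P) \<longleftrightarrow> (is_cnm_local n T \<and> column_bottoms T = P)" for T
  proof (cases "is_cnm_local n T")
    case True then show ?thesis by (simp add: is_cnm_iff_local leaf_matrix_eq_column_bottoms)
  qed (simp add: is_cnm_iff_local)
  then have "(\<exists>!T. is_cnm n T \<and> leaf_matrix T = P) \<longleftrightarrow> (\<exists>!T. is_cnm_local n T \<and> column_bottoms T = P)"
    by presburger
  moreover have "is_perm_matrix n P" if "\<exists>!T. is_cnm_local n T \<and> column_bottoms T = P"
  proof -
    from that obtain T where "is_cnm_local n T" "column_bottoms T = P" by (elim ex1E) blast
    then show ?thesis by (metis is_perm_matrix_column_bottoms)
  qed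
  ultimately show "(is_perm_matrix n P \<and> (\<exists>!T. is_cnm n T \<and> leaf_matrix T = P)) \<longleftrightarrow>
      (\<exists>!T. is_cnm_local n T \<and> column_bottoms T = P)" by argo
qed

lemma unique_leaf_matrices_subset: "unique_leaf_matrices n \<subseteq> Pow ({1..n} \<times> {1..n})"
proof
  fix P assume "P \<in> unique_leaf_matrices n"
  then obtain T where T: "is_cnm_local n T" "P = column_bottoms T"
    unfolding unique_leaf_matrices_def by (auto elim: ex1E)
  moreover have "T \<subseteq> {1..n} \<times> {1..n}" using T(1) by (simp add: is_cnm_local_def)
  ultimately show "P \<in> Pow ({1..n} \<times> {1..n})" using column_bottoms_subset[of T] by simp
qed

lemma converse_mem_unique_leaf_matrices:
  assumes "P \<in> unique_leaf_matrices n" shows "P\<inverse> \<in> unique_leaf_matrices n"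
proof -
  have transpose: "(is_cnm_local n T \<and> column_bottoms T = P\<inverse>) \<longleftrightarrow>
      (is_cnm_local n (T\<inverse>) \<and> column_bottoms (T\<inverse>) = P)" for T
    using column_bottoms_converse[of n T] is_cnm_local_converse[of n T] by auto
  have ex1_converse: "(\<exists>!T. Q (T\<inverse>)) \<longleftrightarrow> (\<exists>!T. Q T)" for Q :: "(nat \<times> nat) set \<Rightarrow> bool"
    by (metis converse_converse)
  show ?thesis
    using assms unfolding unique_leaf_matrices_def mem_Collect_eq transpose
    by (simp only: ex1_converse[of "\<lambda>T. is_cnm_local n T \<and> column_bottoms T = P"])
qed

lemma add_leaf21_mem_unique_leaf_matrices:
  assumes Q: "Q \<in> unique_leaf_matrices m" shows "add_leaf21 Q \<in> unique_leaf_matrices (Suc m)"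
proof -
  obtain S where S: "is_cnm_local m S" "column_bottoms S = Q"
    and S_unique: "\<And>S'. is_cnm_local m S' \<Longrightarrow> column_bottoms S' = Q \<Longrightarrow> S' = S"
    using Q unfolding unique_leaf_matrices_def by (auto elim: ex1E)
  have "T' = cnm_add_leaf21 S"
    if T': "is_cnm_local (Suc m) T'" "column_bottoms T' = add_leaf21 Q" for T'
  proof -
    have "(2, 1) \<in> column_bottoms T'" using T'(2) by (simp add: add_leaf21_def)
    with T'(1) obtain S' where S': "is_cnm_local m S'" "T' = cnm_add_leaf21 S'"
      by (rule cnm_with_leaf21_obtains)
    have "add_leaf21 (column_bottoms S') = add_leaf21 Q"
      using T'(2) S' column_bottoms_cnm_add_leaf21 by simp
    moreover have "column_bottoms S' \<subseteq> UNIV \<times> {1..}" "Q \<subseteq> UNIV \<times> {1..}"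
      using S S' column_bottoms_subset cnm_positive_columns by blast+
    ultimately have "column_bottoms S' = Q" using add_leaf21_eq_iff by blast
    with S_unique S' show ?thesis by simp
  qed
  moreover have "is_cnm_local (Suc m) (cnm_add_leaf21 S)"
    "column_bottoms (cnm_add_leaf21 S) = add_leaf21 Q"
    using S is_cnm_local_cnm_add_leaf21 column_bottoms_cnm_add_leaf21 by simp_all
  ultimately show ?thesis unfolding unique_leaf_matrices_def by blast
qed

lemma unique_leaf_matrices_with_leaf21:
  assumes P: "P \<in> unique_leaf_matrices (Suc m)" and leaf: "(2, 1) \<in> P"
  shows "P \<in> add_leaf21 ` unique_leaf_matrices m"
proof -
  obtain T where T: "is_cnm_local (Suc m) T" "column_bottoms T = P"
    and T_unique: "\<And>T'. is_cnm_local (Suc m) T' \<Longrightarrow> column_bottoms T' = P \<Longrightarrow> T' = T"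
    using P unfolding unique_leaf_matrices_def by (auto elim: ex1E)
  obtain S where S: "is_cnm_local m S" "T = cnm_add_leaf21 S"
    using cnm_with_leaf21_obtains[OF T(1)] leaf T(2) by blast
  have P_eq: "P = add_leaf21 (column_bottoms S)"
    using T(2) S column_bottoms_cnm_add_leaf21 by simp
  have "S' = S" if S': "is_cnm_local m S'" "column_bottoms S' = column_bottoms S" for S'
  proof -
    have "cnm_add_leaf21 S' = T"
      using T_unique S' P_eq is_cnm_local_cnm_add_leaf21 column_bottoms_cnm_add_leaf21 by simp
    then show ?thesis
      using S cnm_add_leaf21_eq_iff cnm_positive_columns S'(1) by metis
  qed
  with S(1) have "column_bottoms S \<in> unique_leaf_matrices m"
    unfolding unique_leaf_matrices_def by blast
  with P_eq show ?thesis by blast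
qed

text \<open>A leaf matrix with a unique CNM contains \<open>(2, 1)\<close> or \<open>(1, 2)\<close>; by symmetry it is obtained
  from a smaller one by \<open>add_leaf21\<close> or \<open>add_leaf12\<close>.\<close>

lemma unique_leaf_matrices_Suc:
  assumes m: "1 \<le> m"
  shows "unique_leaf_matrices (Suc m) =
    add_leaf21 ` unique_leaf_matrices m \<union> add_leaf12 ` unique_leaf_matrices m"
proof (intro equalityI subsetI)
  fix P assume P: "P \<in> unique_leaf_matrices (Suc m)"
  then obtain T where T: "is_cnm_local (Suc m) T" "column_bottoms T = P"
    and T_unique: "\<And>T'. is_cnm_local (Suc m) T' \<Longrightarrow> column_bottoms T' = P \<Longrightarrow> T' = T"
    unfolding unique_leaf_matrices_def by (auto elim: ex1E)
  have "(2, 1) \<in> P \<or> (1, 2) \<in> P"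
  proof (rule ccontr)
    assume "\<not> ((2, 1) \<in> P \<or> (1, 2) \<in> P)"
    with cnm_other_with_same_leaves[OF T(1)] m T(2) obtain T' where
      "is_cnm_local (Suc m) T'" "column_bottoms T' = P" "T' \<noteq> T" by auto
    with T_unique show False by blast
  qed
  then show "P \<in> add_leaf21 ` unique_leaf_matrices m \<union> add_leaf12 ` unique_leaf_matrices m"
  proof
    assume "(2, 1) \<in> P"
    with unique_leaf_matrices_with_leaf21[OF P] show ?thesis by blast
  next
    assume "(1, 2) \<in> P"
    with converse_mem_unique_leaf_matrices[OF P] obtain Q
      where Q: "Q \<in> unique_leaf_matrices m" "P\<inverse> = add_leaf21 Q"
      using unique_leaf_matrices_with_leaf21 by blast
    then have "P = add_leaf12 (Q\<inverse>)" unfolding add_leaf12_def by (metis converse_converse)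
    with converse_mem_unique_leaf_matrices[OF Q(1)] show ?thesis by blast
  qed
next
  fix P assume "P \<in> add_leaf21 ` unique_leaf_matrices m \<union> add_leaf12 ` unique_leaf_matrices m"
  then show "P \<in> unique_leaf_matrices (Suc m)"
  proof (elim UnE imageE)
    fix Q assume "Q \<in> unique_leaf_matrices m" "P = add_leaf21 Q"
    then show ?thesis using add_leaf21_mem_unique_leaf_matrices by simp
  next
    fix Q assume "Q \<in> unique_leaf_matrices m" "P = add_leaf12 Q"
    then show ?thesis unfolding add_leaf12_def
      using add_leaf21_mem_unique_leaf_matrices converse_mem_unique_leaf_matrices by simp
  qed
qed

lemma unique_leaf_matrices_positive: "Q \<in> unique_leaf_matrices m \<Longrightarrow> Q \<subseteq> UNIV \<times> {1..}"
  using unique_leaf_matrices_subset[of m] by (auto dest!: subsetD)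

lemma root_notin_unique_leaf_matrices:
  assumes "2 \<le> m" "Q \<in> unique_leaf_matrices m" shows "(1, 1) \<notin> Q"
proof -
  obtain S where S: "is_cnm_local m S" "Q = column_bottoms S"
    using assms(2) unfolding unique_leaf_matrices_def by (auto elim: ex1E)
  with cnm_root_has_below[OF S(1) assms(1)] show ?thesis by (simp add: mem_column_bottoms)
qed

lemma add_leaf21_add_leaf12_disjoint:
  assumes m: "2 \<le> m"
  shows "add_leaf21 ` unique_leaf_matrices m \<inter> add_leaf12 ` unique_leaf_matrices m = {}"
proof -
  have "add_leaf21 Q \<noteq> add_leaf12 Q'" if Q: "Q \<in> unique_leaf_matrices m" for Q Q'
  proof
    assume "add_leaf21 Q = add_leaf12 Q'"
    moreover have "(1, 2) \<in> add_leaf12 Q'" unfolding add_leaf12_def add_leaf21_def by simp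
    ultimately have "(1, 2) \<in> add_leaf21 Q" by simp
    then have "(1, 2) \<in> shift ` Q" unfolding add_leaf21_def by simp
    then have "(1, 1) \<in> Q" unfolding mem_shift_image by (auto simp: shift_row_def split: if_splits)
    with root_notin_unique_leaf_matrices[OF m Q] show False by simp
  qed
  then show ?thesis by blast
qed

lemma inj_on_add_leaf21: "inj_on add_leaf21 (unique_leaf_matrices m)"
proof (rule inj_onI)
  fix Q Q' assume "Q \<in> unique_leaf_matrices m" "Q' \<in> unique_leaf_matrices m" "add_leaf21 Q = add_leaf21 Q'"
  then show "Q = Q'" using add_leaf21_eq_iff unique_leaf_matrices_positive by metis
qed

lemma inj_on_add_leaf12: "inj_on add_leaf12 (unique_leaf_matrices m)"
proof (rule inj_onI)
  fix Q Q' assume Q: "Q \<in> unique_leaf_matrices m" "Q' \<in> unique_leaf_matrices m"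
    and "add_leaf12 Q = add_leaf12 Q'"
  then have "add_leaf21 (Q\<inverse>) = add_leaf21 (Q'\<inverse>)" unfolding add_leaf12_def by simp
  moreover have "Q\<inverse> \<in> unique_leaf_matrices m" "Q'\<inverse> \<in> unique_leaf_matrices m"
    using Q converse_mem_unique_leaf_matrices by simp_all
  ultimately have "Q\<inverse> = Q'\<inverse>" by (rule inj_onD[OF inj_on_add_leaf21])
  then show "Q = Q'" by simp
qed

lemma card_unique_leaf_matrices_Suc:
  assumes m: "2 \<le> m"
  shows "card (unique_leaf_matrices (Suc m)) = 2 * card (unique_leaf_matrices m)"
proof -
  have fin: "finite (unique_leaf_matrices m)"
    using unique_leaf_matrices_subset by (rule finite_subset) simp
  have "card (unique_leaf_matrices (Suc m)) =
      card (add_leaf21 ` unique_leaf_matrices m) + card (add_leaf12 ` unique_leaf_matrices m)"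
    using unique_leaf_matrices_Suc add_leaf21_add_leaf12_disjoint m fin
    by (simp add: card_Un_disjoint)
  also have "\<dots> = 2 * card (unique_leaf_matrices m)"
    using card_image[OF inj_on_add_leaf21] card_image[OF inj_on_add_leaf12] by simp
  finally show ?thesis .
qed

lemma unique_leaf_matrices_1: "unique_leaf_matrices 1 = {{(1, 1)}}"
proof -
  have cnm1: "is_cnm_local 1 T \<longleftrightarrow> T = {(1, 1)}" for T
  proof
    show "is_cnm_local 1 T \<Longrightarrow> T = {(1, 1)}" unfolding is_cnm_local_def by auto
    show "T = {(1, 1)} \<Longrightarrow> is_cnm_local 1 T"
      by (auto simp: is_cnm_local_def has_below_def has_right_def)
  qed
  have "column_bottoms {(1, 1)} = {(1, 1)}" unfolding column_bottoms_def has_below_def by auto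
  then show ?thesis unfolding unique_leaf_matrices_def cnm1 by auto
qed

lemma card_unique_leaf_matrices_2: "card (unique_leaf_matrices 2) = 1"
proof -
  have "add_leaf21 {(1, 1)} = {(2, 1), (1, 2)}"
    unfolding add_leaf21_def by (simp add: shift_def shift_row_def numeral_2_eq_2)
  moreover have "{(1::nat, 1::nat)}\<inverse> = {(1, 1)}" "{(2::nat, 1::nat), (1, 2)}\<inverse> = {(2, 1), (1, 2)}"
    by auto
  ultimately have "add_leaf21 {(1, 1)} = {(2, 1), (1, 2)}" "add_leaf12 {(1, 1)} = {(2, 1), (1, 2)}"
    unfolding add_leaf12_def by simp_all
  then have "unique_leaf_matrices 2 = {{(2, 1), (1, 2)}}"
    using unique_leaf_matrices_Suc[of 1] unique_leaf_matrices_1 by (simp add: numeral_2_eq_2)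
  then show ?thesis by simp
qed

lemma card_unique_leaf_matrices: "2 \<le> n \<Longrightarrow> card (unique_leaf_matrices n) = 2 ^ (n - 2)"
proof (induction n rule: dec_induct)
  case (step n)
  moreover have "Suc n - 2 = Suc (n - 2)" using step(1) by simp
  ultimately show ?case using card_unique_leaf_matrices_Suc[OF step(1)] by simp
qed (simp add: card_unique_leaf_matrices_2)

theorem corollary3p5:
  fixes n :: nat
  assumes "n \<ge> 2"
  shows "card {P. is_perm_matrix n P \<and> (\<exists>!T. is_cnm n T \<and> leaf_matrix T = P)} = 2 ^ (n - 2)"
  using card_unique_leaf_matrices[OF assms] by (simp add: unique_leaf_matrices_eq)

end
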